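(* Assume the common support, overlap and unconfoundedness assumptions. Then for all $x\in\mathcal X$, $\theta_{\mathrm{AR}}(x)=r(x,p_0)\,\Gamma_{\mathrm{AR}}(x,p)$, where $p=p_0$ under Design 1 and $p=0$ under Design 2.
   Context: Population variables: $Y^*\in\{0,1\}$ (outcome), $T^*\in\{0,1\}$ (treatment), $X^*$ (covariate vector). Potential outcomes $Y^*(1),Y^*(0)\in\{0,1\}$ satisfy $Y^*=T^*Y^*(1)+(1-T^* )Y^*(0)$. Let $p_0:=\Pr(Y^*=1)$. The observed vector $(Y,T,X)$ arises from Bernoulli sampling: $Y\in\{0,1\}$ is drawn with known probability $h_0:=\Pr(Y=1)\in(0,1)$, and given $Y=y$, $(T,X)$ is drawn from a distribution $\mathcal P_y$. Densities (or mass functions) are denoted by $f$. Design 1 (case-control): for all $t\in\{0,1\}$, $x\in\mathcal X$, $y\in\{0,1\}$, $f_{X|Y}(x\mid y)=f_{X^*|Y^*}(x\mid y)$ and $\Pr(T=t\mid X=x,Y=y)=\Pr(T^*=t\mid X^*=x,Y^*=y)$. Design 2 (case-population): for all $t,x$, $f_{X|Y}(x\mid 0)=f_{X^*}(x)$, $\Pr(T=t\mid X=x,Y=0)=\Pr(T^*=t\mid X^*=x)$, $f_{X|Y}(x\mid 1)=f_{X^*|Y^*}(x\mid 1)$, $\Pr(T=t\mid X=x,Y=1)=\Pr(T^*=t\mid X^*=x,Y^*=1)$. Common support assumption: the support of $X^*$ and that of $X$ given $Y=y$ for $y=0,1$ coincide; call it $\mathcal X$. Let $\Pi(t\mid y,x):=\Pr(T=t\mid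 Y=y,X=x)$, assumed nonzero for all $t,y$. For $p\in[0,1]$, under Design 1, $r(x,p):=\frac{p(1-h_0)\Pr(Y=1\mid X=x)}{p(1-h_0)\Pr(Y=1\mid X=x)+h_0(1-p)\Pr(Y=0\mid X=x)}$, and under Design 2, $r(x,p):=\frac{p(1-h_0)}{h_0}\frac{\Pr(Y=1\mid X=x)}{\Pr(Y=0\mid X=x)}$. Define $\Gamma_{\mathrm{AR}}(x,p):=\frac{\Pi(1\mid 1,x)}{\Pi(1\mid 0,x)+r(x,p)\{\Pi(1\mid 1,x)-\Pi(1\mid 0,x)\}}-\frac{\Pi(0\mid 1,x)}{\Pi(0\mid 0,x)+r(x,p)\{\Pi(0\mid 1,x)-\Pi(0\mid 0,x)\}}$. Causal attributable risk: $\theta_{\mathrm{AR}}(x):=\Pr\{Y^*(1)=1\mid X^*=x\}-\Pr\{Y^*(0)=1\mid X^*=x\}$. Overlap: for all $(t,x)\in\{0,1\}\times\mathcal X$, $0<\Pr\{Y^*(t)=1\mid X^*=x\}<1$ and $0<\Pr(T^*=1\mid X^*=x)<1$. Unconfoundedness: for all $t,x$, $\Pr\{Y^*(t)=1\mid T^*=1,X^*=x\}=\Pr\{Y^*(t)=1\mid T^*=0,X^*=x\}$. *)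

theory Defs
  imports "HOL-Probability.Probability"
begin

text \<open>
Population: a dominating measure M on the covariate space, a density fXs of X*
w.r.t. M, and for every x a pmf K x of the triple (Y*(1), Y*(0), T*) given X* = x.
Observed sample: h0 = Pr(Y=1), conditional densities fXY y of X given Y = y w.r.t. M,
and for every (y,x) a pmf PT y x of T given Y = y, X = x.
\<close>

datatype design = CaseControl | CasePopulation

type_synonym pop = "bool \<times> bool \<times> bool"  (* (Y*(1), Y*(0), T* ) *)

definition Ystar :: "pop \<Rightarrow> bool" where
  "Ystar w = (if snd (snd w) then fst w else fst (snd w))"

definition Tstar :: "pop \<Rightarrow> bool" where
  "Tstar w = snd (snd w)"

definition Ypot :: "bool \<Rightarrow> pop \<Rightarrow> bool" where
  "Ypot t w = (if t then fst w else fst (snd w))"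

definition cprob :: "('x \<Rightarrow> pop pmf) \<Rightarrow> 'x \<Rightarrow> (pop \<Rightarrow> bool) \<Rightarrow> real" where
  "cprob K x P = measure_pmf.prob (K x) {w. P w}"

definition popY1 :: "('x \<Rightarrow> pop pmf) \<Rightarrow> 'x \<Rightarrow> real" where
  "popY1 K x = cprob K x Ystar"

definition popT :: "('x \<Rightarrow> pop pmf) \<Rightarrow> 'x \<Rightarrow> bool \<Rightarrow> real" where
  "popT K x t = cprob K x (\<lambda>w. Tstar w = t)"

definition popT_Y :: "('x \<Rightarrow> pop pmf) \<Rightarrow> 'x \<Rightarrow> bool \<Rightarrow> bool \<Rightarrow> real" where
  "popT_Y K x t y = cprob K x (\<lambda>w. Tstar w = t \<and> Ystar w = y) / cprob K x (\<lambda>w. Ystar w = y)"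

definition popYpot :: "('x \<Rightarrow> pop pmf) \<Rightarrow> 'x \<Rightarrow> bool \<Rightarrow> real" where
  "popYpot K x t = cprob K x (Ypot t)"

definition popYpot_T :: "('x \<Rightarrow> pop pmf) \<Rightarrow> 'x \<Rightarrow> bool \<Rightarrow> bool \<Rightarrow> real" where
  "popYpot_T K x s t = cprob K x (\<lambda>w. Ypot s w \<and> Tstar w = t) / cprob K x (\<lambda>w. Tstar w = t)"

definition p0 :: "'x measure \<Rightarrow> ('x \<Rightarrow> real) \<Rightarrow> ('x \<Rightarrow> pop pmf) \<Rightarrow> real" where
  "p0 M fXs K = (\<integral>x. fXs x * popY1 K x \<partial>M)"

text \<open>f_{X*|Y*}(x | y) (Bayes' rule)\<close>
definition fXsY :: "'x measure \<Rightarrow> ('x \<Rightarrow> real) \<Rightarrow> ('x \<Rightarrow> pop pmf) \<Rightarrow> bool \<Rightarrow> 'x \<Rightarrow> real" where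
  "fXsY M fXs K y x =
     (if y then fXs x * popY1 K x / p0 M fXs K
      else fXs x * (1 - popY1 K x) / (1 - p0 M fXs K))"

definition thetaAR :: "('x \<Rightarrow> pop pmf) \<Rightarrow> 'x \<Rightarrow> real" where
  "thetaAR K x = popYpot K x True - popYpot K x False"

definition supp :: "('x \<Rightarrow> real) \<Rightarrow> 'x set" where
  "supp f = {x. 0 < f x}"

text \<open>Observed: Pr(Y = y | X = x) via Bayes' rule\<close>
definition obsY :: "real \<Rightarrow> (bool \<Rightarrow> 'x \<Rightarrow> real) \<Rightarrow> bool \<Rightarrow> 'x \<Rightarrow> real" where
  "obsY h0 fXY y x =
     (if y then h0 * fXY True x else (1 - h0) * fXY False x)
     / (h0 * fXY True x + (1 - h0) * fXY False x)"

definition Pi :: "(bool \<Rightarrow> 'x \<Rightarrow> bool pmf) \<Rightarrow> bool \<Rightarrow> bool \<Rightarrow> 'x \<Rightarrow> real" where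
  "Pi PT t y x = pmf (PT y x) t"

definition r_AR :: "design \<Rightarrow> real \<Rightarrow> (bool \<Rightarrow> 'x \<Rightarrow> real) \<Rightarrow> 'x \<Rightarrow> real \<Rightarrow> real" where
  "r_AR d h0 fXY x p = (case d of
     CaseControl \<Rightarrow>
       p * (1 - h0) * obsY h0 fXY True x /
       (p * (1 - h0) * obsY h0 fXY True x + h0 * (1 - p) * obsY h0 fXY False x)
   | CasePopulation \<Rightarrow>
       p * (1 - h0) / h0 * (obsY h0 fXY True x / obsY h0 fXY False x))"

definition Gamma_AR :: "design \<Rightarrow> real \<Rightarrow> (bool \<Rightarrow> 'x \<Rightarrow> real) \<Rightarrow> (bool \<Rightarrow> 'x \<Rightarrow> bool pmf)
    \<Rightarrow> 'x \<Rightarrow> real \<Rightarrow> real" where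
  "Gamma_AR d h0 fXY PT x p =
     (let r = r_AR d h0 fXY x p in
        Pi PT True True x / (Pi PT True False x + r * (Pi PT True True x - Pi PT True False x))
      - Pi PT False True x / (Pi PT False False x + r * (Pi PT False True x - Pi PT False False x)))"

definition design_holds :: "design \<Rightarrow> 'x measure \<Rightarrow> ('x \<Rightarrow> real) \<Rightarrow> ('x \<Rightarrow> pop pmf)
    \<Rightarrow> (bool \<Rightarrow> 'x \<Rightarrow> real) \<Rightarrow> (bool \<Rightarrow> 'x \<Rightarrow> bool pmf) \<Rightarrow> bool" where
  "design_holds d M fXs K fXY PT = (case d of
     CaseControl \<Rightarrow>
       (\<forall>x\<in>supp fXs. \<forall>y t. fXY y x = fXsY M fXs K y x \<and> Pi PT t y x = popT_Y K x t y)
   | CasePopulation \<Rightarrow>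
       (\<forall>x\<in>supp fXs. \<forall>t.
          fXY False x = fXs x \<and> Pi PT t False x = popT K x t \<and>
          fXY True x = fXsY M fXs K True x \<and> Pi PT t True x = popT_Y K x t True))"

end

theory Submission
  imports Defs
begin

text \<open>
  Fix a covariate value x and write m = Pr(Y* = 1 | x).  Unconfoundedness makes Y*(t) independent
  of T* given x, and on the event T* = t the observed outcome Y* is Y*(t); hence
  Pr(T* = t, Y* = 1 | x) = Pr(Y*(t) = 1 | x) Pr(T* = t | x), i.e.
  Pr(Y*(t) = 1 | x) = m Pr(T* = t | Y* = 1, x) / Pr(T* = t | x),
  and the attributable risk is m times a difference of two such ratios.  Both sampling designs
  recover m as r(x, p0) by Bayes' rule, and the denominator Pr(T* = t | x) as
  \<Pi>(t|0,x) + r {\<Pi>(t|1,x) - \<Pi>(t|0,x)}: in the case-control design by the law of total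
  probability with r = m, in the case-population design directly with r = 0, because there
  the controls are drawn from the whole population.
\<close>

lemma cprob_True [simp]: "cprob K x (\<lambda>_. True) = 1"
  by (simp add: cprob_def)

lemma cprob_split:
  "cprob K x P = cprob K x (\<lambda>w. P w \<and> Q w) + cprob K x (\<lambda>w. P w \<and> \<not> Q w)"
proof -
  have "measure_pmf.prob (K x) ({w. P w \<and> Q w} \<union> {w. P w \<and> \<not> Q w})
      = cprob K x (\<lambda>w. P w \<and> Q w) + cprob K x (\<lambda>w. P w \<and> \<not> Q w)"
    unfolding cprob_def by (rule measure_pmf.finite_measure_Union) auto
  moreover have "{w. P w \<and> Q w} \<union> {w. P w \<and> \<not> Q w} = {w. P w}"
    by auto
  ultimately show ?thesis
    by (simp add: cprob_def)
qed

lemma cprob_not: "cprob K x (\<lambda>w. \<not> P w) = 1 - cprob K x P"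
  using cprob_split[of K x "\<lambda>_. True" P] by simp

lemma popT_False: "popT K x False = 1 - popT K x True"
  using cprob_not[of K x Tstar] by (simp add: popT_def)

lemma popT_pos:
  assumes "0 < popT K x True" "popT K x True < 1"
  shows "0 < popT K x t"
  using assms by (cases t) (simp_all add: popT_False)

lemma popT_eq_mixture_popT_Y:
  assumes "0 < popY1 K x" "popY1 K x < 1"
  shows "popT_Y K x t False + popY1 K x * (popT_Y K x t True - popT_Y K x t False) = popT K x t"
proof -
  define a where "a = cprob K x (\<lambda>w. Tstar w = t \<and> Ystar w)"
  define b where "b = cprob K x (\<lambda>w. Tstar w = t \<and> \<not> Ystar w)"
  have "popT K x t = a + b"
    unfolding popT_def a_def b_def by (rule cprob_split)
  moreover have "popT_Y K x t True = a / popY1 K x" "popT_Y K x t False = b / (1 - popY1 K x)"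
    by (simp_all add: popT_Y_def popY1_def a_def b_def cprob_not)
  ultimately show ?thesis
    using assms by (simp add: field_simps)
qed

lemma cprob_Tstar_Ystar_eq_Ypot:
  "cprob K x (\<lambda>w. Tstar w = t \<and> Ystar w) = cprob K x (\<lambda>w. Ypot t w \<and> Tstar w = t)"
  by (rule arg_cong[where f = "cprob K x"]) (auto simp: fun_eq_iff Ystar_def Ypot_def Tstar_def)

lemma cprob_Ypot_Tstar_eq_product:
  assumes T: "0 < popT K x True" "popT K x True < 1"
    and unconf: "popYpot_T K x s True = popYpot_T K x s False"
  shows "cprob K x (\<lambda>w. Ypot s w \<and> Tstar w = t) = popYpot K x s * popT K x t"
proof -
  define c where "c t = cprob K x (\<lambda>w. Ypot s w \<and> Tstar w = t)" for t
  define k where "k = popYpot_T K x s True"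
  have "c t = popYpot_T K x s t * popT K x t" for t
    using popT_pos[OF T, of t] by (simp add: c_def popYpot_T_def popT_def)
  moreover have "popYpot_T K x s t = k" for t
    using unconf by (cases t) (simp_all add: k_def)
  ultimately have c: "c t = k * popT K x t" for t
    by simp
  have "popYpot K x s = c True + c False"
    using cprob_split[of K x "Ypot s" Tstar] by (simp add: popYpot_def c_def)
  also have "\<dots> = k"
    by (simp add: c popT_False algebra_simps)
  finally show ?thesis
    using c c_def by simp
qed

lemma popY1_eq_mixture_popYpot:
  assumes T: "0 < popT K x True" "popT K x True < 1"
    and unconf: "\<forall>s. popYpot_T K x s True = popYpot_T K x s False"
  shows "popY1 K x = popYpot K x True * popT K x True + popYpot K x False * popT K x False"
proof -
  have "popY1 K x = cprob K x (\<lambda>w. Tstar w = True \<and> Ystar w)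
      + cprob K x (\<lambda>w. Tstar w = False \<and> Ystar w)"
    using cprob_split[of K x Ystar Tstar] by (simp add: popY1_def conj_commute)
  also have "\<dots> = popYpot K x True * popT K x True + popYpot K x False * popT K x False"
    by (simp only: cprob_Tstar_Ystar_eq_Ypot cprob_Ypot_Tstar_eq_product[OF T unconf[rule_format]])
  finally show ?thesis .
qed

lemma popY1_bounds:
  assumes T: "0 < popT K x True" "popT K x True < 1"
    and Y: "\<forall>s. 0 < popYpot K x s \<and> popYpot K x s < 1"
    and unconf: "\<forall>s. popYpot_T K x s True = popYpot_T K x s False"
  shows "0 < popY1 K x" "popY1 K x < 1"
proof -
  have q: "0 < popYpot K x s" "popYpot K x s < 1" for s
    using Y by auto
  have "popYpot K x True * popT K x True < popT K x True"
    "popYpot K x False * (1 - popT K x True) < 1 - popT K x True"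
    using q T by simp_all
  moreover have "0 < popYpot K x True * popT K x True"
    "0 < popYpot K x False * (1 - popT K x True)"
    using q T by simp_all
  ultimately show "0 < popY1 K x" "popY1 K x < 1"
    using popY1_eq_mixture_popYpot[OF T unconf] popT_False[of K x] by simp_all
qed

lemma popYpot_Bayes:
  assumes T: "0 < popT K x True" "popT K x True < 1"
    and unconf: "popYpot_T K x t True = popYpot_T K x t False"
    and Y1: "popY1 K x \<noteq> 0"
  shows "popYpot K x t = popY1 K x * (popT_Y K x t True / popT K x t)"
proof -
  have "popY1 K x * popT_Y K x t True = cprob K x (\<lambda>w. Tstar w = t \<and> Ystar w)"
    using Y1 by (simp add: popT_Y_def popY1_def)
  also have "\<dots> = popYpot K x t * popT K x t"
    by (simp only: cprob_Tstar_Ystar_eq_Ypot cprob_Ypot_Tstar_eq_product[OF T unconf])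
  finally show ?thesis
    using popT_pos[OF T, of t] by (simp add: field_simps)
qed

lemma thetaAR_eq_popY1_mult:
  assumes T: "0 < popT K x True" "popT K x True < 1"
    and unconf: "\<forall>s. popYpot_T K x s True = popYpot_T K x s False"
    and Y1: "popY1 K x \<noteq> 0"
  shows "thetaAR K x = popY1 K x *
    (popT_Y K x True True / popT K x True - popT_Y K x False True / popT K x False)"
  using popYpot_Bayes[OF T unconf[rule_format] Y1]
  by (simp add: thetaAR_def right_diff_distrib)

lemma r_AR_CaseControl_Bayes:
  assumes h0: "0 < h0" "h0 < 1"
    and pos: "0 < fXY True x" "0 < fXY False x"
    and f1: "fXY True x = f * m / p" and f0: "fXY False x = f * (1 - m) / (1 - p)"
  shows "r_AR CaseControl h0 fXY x p = m"
proof -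
  define S where "S = h0 * fXY True x + (1 - h0) * fXY False x"
  define N where "N = (1 - h0) * h0 * f / S"
  have "f \<noteq> 0" "p \<noteq> 0" "p \<noteq> 1"
    using pos f1 f0 by auto
  moreover have "0 < S"
    using h0 pos by (simp add: S_def add_pos_pos)
  ultimately have "N \<noteq> 0"
    and "p * (1 - h0) * obsY h0 fXY True x = N * m"
    and "h0 * (1 - p) * obsY h0 fXY False x = N * (1 - m)"
    using h0 by (simp_all add: N_def obsY_def flip: S_def) (simp_all add: f1 f0 field_simps)
  then show ?thesis
    by (simp add: r_AR_def flip: distrib_left)
qed

lemma r_AR_CasePopulation_Bayes:
  assumes h0: "0 < h0" "h0 < 1"
    and pos: "0 < fXY True x" "0 < fXY False x"
    and f1: "fXY True x = fXY False x * m / p"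
  shows "r_AR CasePopulation h0 fXY x p = m"
proof -
  define S where "S = h0 * fXY True x + (1 - h0) * fXY False x"
  have "p \<noteq> 0"
    using pos f1 by auto
  moreover have "0 < S"
    using h0 pos by (simp add: S_def add_pos_pos)
  ultimately show ?thesis
    using h0 pos by (simp add: r_AR_def obsY_def flip: S_def) (simp add: f1 field_simps)
qed

lemma Gamma_AR_CaseControl:
  assumes Pi: "\<forall>t y. Pi PT t y x = popT_Y K x t y"
    and r: "r_AR CaseControl h0 fXY x p = popY1 K x"
    and Y1: "0 < popY1 K x" "popY1 K x < 1"
  shows "Gamma_AR CaseControl h0 fXY PT x p =
    popT_Y K x True True / popT K x True - popT_Y K x False True / popT K x False"
  using popT_eq_mixture_popT_Y[OF Y1] by (simp add: Gamma_AR_def Let_def Pi r)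

lemma Gamma_AR_CasePopulation_0:
  assumes "\<forall>t. Pi PT t False x = popT K x t \<and> Pi PT t True x = popT_Y K x t True"
  shows "Gamma_AR CasePopulation h0 fXY PT x 0 =
    popT_Y K x True True / popT K x True - popT_Y K x False True / popT K x False"
  using assms by (simp add: Gamma_AR_def r_AR_def)

theorem theorem5:
  fixes d :: design and M :: "'x measure" and fXs :: "'x \<Rightarrow> real"
    and K :: "'x \<Rightarrow> pop pmf" and h0 :: real
    and fXY :: "bool \<Rightarrow> 'x \<Rightarrow> real" and PT :: "bool \<Rightarrow> 'x \<Rightarrow> bool pmf"
  assumes dens_pop: "\<forall>x. 0 \<le> fXs x" "integrable M fXs" "(\<integral>x. fXs x \<partial>M) = 1"
    and meas_K: "(\<lambda>x. popY1 K x) \<in> borel_measurable M"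
    and dens_obs: "\<forall>y x. 0 \<le> fXY y x" "\<forall>y. integrable M (fXY y)"
      "\<forall>y. (\<integral>x. fXY y x \<partial>M) = 1"
    and h0: "0 < h0" "h0 < 1"
    and design: "design_holds d M fXs K fXY PT"
    and common_support: "\<forall>y. supp (fXY y) = supp fXs"
    and Pi_nonzero: "\<forall>x\<in>supp fXs. \<forall>t y. Pi PT t y x \<noteq> 0"
    and overlap: "\<forall>x\<in>supp fXs. \<forall>t. 0 < popYpot K x t \<and> popYpot K x t < 1"
                 "\<forall>x\<in>supp fXs. 0 < popT K x True \<and> popT K x True < 1"
    and unconf: "\<forall>x\<in>supp fXs. \<forall>t. popYpot_T K x t True = popYpot_T K x t False"
  shows "\<forall>x\<in>supp fXs. thetaAR K x =
           r_AR d h0 fXY x (p0 M fXs K) *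
           Gamma_AR d h0 fXY PT x
             (case d of CaseControl \<Rightarrow> p0 M fXs K | CasePopulation \<Rightarrow> 0)"
proof
  fix x assume x: "x \<in> supp fXs"
  have T: "0 < popT K x True" "popT K x True < 1"
    and unconf_x: "\<forall>s. popYpot_T K x s True = popYpot_T K x s False"
    using overlap(2) unconf x by auto
  have Y1: "0 < popY1 K x" "popY1 K x < 1"
    using popY1_bounds[OF T _ unconf_x] overlap(1) x by auto
  then have theta: "thetaAR K x = popY1 K x *
      (popT_Y K x True True / popT K x True - popT_Y K x False True / popT K x False)"
    by (simp add: thetaAR_eq_popY1_mult[OF T unconf_x])
  have fXY_pos: "0 < fXY True x" "0 < fXY False x"
    using common_support x by (auto simp: supp_def)
  show "thetaAR K x = r_AR d h0 fXY x (p0 M fXs K) *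
    Gamma_AR d h0 fXY PT x (case d of CaseControl \<Rightarrow> p0 M fXs K | CasePopulation \<Rightarrow> 0)"
  proof (cases d)
    case CaseControl
    then have D: "\<forall>y t. fXY y x = fXsY M fXs K y x \<and> Pi PT t y x = popT_Y K x t y"
      using design x by (simp add: design_holds_def)
    then have r: "r_AR CaseControl h0 fXY x (p0 M fXs K) = popY1 K x"
      by (intro r_AR_CaseControl_Bayes[where fXY = fXY and x = x and f = "fXs x", OF h0 fXY_pos])
        (simp_all add: fXsY_def)
    show ?thesis
      using CaseControl D theta r Gamma_AR_CaseControl[OF _ r Y1] by simp
  next
    case CasePopulation
    then have D: "\<forall>t. fXY False x = fXs x \<and> Pi PT t False x = popT K x t \<and>
        fXY True x = fXsY M fXs K True x \<and> Pi PT t True x = popT_Y K x t True"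
      using design x by (simp add: design_holds_def)
    then have r: "r_AR CasePopulation h0 fXY x (p0 M fXs K) = popY1 K x"
      by (intro r_AR_CasePopulation_Bayes[where fXY = fXY and x = x, OF h0 fXY_pos])
        (simp add: fXsY_def)
    show ?thesis
      using CasePopulation D theta r Gamma_AR_CasePopulation_0[of PT x K] by simp
  qed
qed

end
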